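(* Let $Q\in\mathbb{N}$ and let $c_{\mathrm m},c_{\mathrm s},c_{\mathrm r}>0$. Consider the distributed computing problem described in the context, in the sequential implementation, with $N$ sufficiently large. Define \[ r^*=\max\ \underset{r\in\{0,1,\ldots,Q\}}{\operatorname{argmin}}\ \Big( c_{\mathrm m}\frac{r}{Q}+c_{\mathrm s}\frac{Q-r}{Q(r+1)}\Big). \] Then the minimum execution time is \[ T^*_{\mathrm{sequential}}=c_{\mathrm m}\frac{r^*}{Q}+c_{\mathrm s}\frac{Q-r^*}{Q(r^*+1)}+c_{\mathrm r}. \] Moreover, $T^*_{\mathrm{sequential}}$ can be exactly achieved using a finite number of servers if and only if $r^*\neq 0$, and for $r^*\neq 0$ the minimum number of servers needed to achieve it is \[ K^*_{\mathrm{sequential}}=\begin{cases} Q+\lceil Q/r^*\rceil, & 0<r^*<Q,\\ Q, & r^*=Q.\end{cases} \]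
   Context: Problem: given $N$ input files $w_1,\ldots,w_N\in\mathbb{F}_{2^F}$, compute $Q$ output functions $\phi_q(w_1,\ldots,w_N)=h_q(g_{q,1}(w_1),\ldots,g_{q,N}(w_N))\in\mathbb{F}_{2^B}$, $q\in\{1,\ldots,Q\}$, where the Map function $\vec g_n=(g_{1,n},\ldots,g_{Q,n})$ maps file $w_n$ to $Q$ intermediate values $v_{q,n}=g_{q,n}(w_n)\in\mathbb{F}_{2^T}$, and the Reduce function $h_q$ maps $(v_{q,1},\ldots,v_{q,N})$ to $u_q=\phi_q(w_1,\ldots,w_N)$. A computing scheme chooses a number of servers $K\in\mathbb{N}$, a Map assignment $\boldsymbol{\mathcal M}=(\mathcal M_1,\ldots,\mathcal M_K)$ with $\mathcal M_k\subseteq\{1,\ldots,N\}$ and $\bigcup_k\mathcal M_k=\{1,\ldots,N\}$ (server $k$ computes $\vec g_n(w_n)$ for $n\in\mathcal M_k$), a Reduce assignment $\boldsymbol{\mathcal W}=(\mathcal W_1,\ldots,\mathcal W_K)$, a partition of $\{1,\ldots,Q\}$ into pairwise disjoint (possibly empty) sets (server $k$ must compute $u_q$ for $q\in\mathcal W_k$), and a shuffling scheme: each server $k$ creates a message $X_k=\psi_k(\{\vec g_n:n\in\mathcal M_k\})$ and multicasts it to a subset of the other servers (multicasting costs the same as unicasting). The shuffling scheme is valid if, for every possible realization of the intermediate values, each server $k$ can decode all $v_{q,n}$ with $q\in\mathcal W_k$ from its locally computed values and the received messages. Peak computation load $p=\max_k|\mathcal M_k|/N$; communication load $L$ = total number of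 bits sent by all servers divided by $QNT$. Map time $T_{\mathrm{map}}=c_{\mathrm m}p$, Shuffle time $T_{\mathrm{shuffle}}=c_{\mathrm s}L$, Reduce time $T_{\mathrm{reduce}}=c_{\mathrm r}\max_k|\mathcal W_k|$. Sequential implementation: execution time $T_{\mathrm{sequential}}=T_{\mathrm{map}}+T_{\mathrm{shuffle}}+T_{\mathrm{reduce}}$. For given $K,\boldsymbol{\mathcal M},\boldsymbol{\mathcal W}$, $T^*_{\mathrm{sequential}}(K,\boldsymbol{\mathcal M},\boldsymbol{\mathcal W})$ is the execution time when a valid shuffling scheme of minimum shuffle time is used; $T^*_{\mathrm{sequential}}=\inf_{K,\boldsymbol{\mathcal M},\boldsymbol{\mathcal W}}T^*_{\mathrm{sequential}}(K,\boldsymbol{\mathcal M},\boldsymbol{\mathcal W})$, with $N$ assumed large (the paper works in the regime of large $N$, so that files can be partitioned evenly as needed). $K^*_{\mathrm{sequential}}=\min\{K\in\mathbb{N}:\min_{\boldsymbol{\mathcal M},\boldsymbol{\mathcal W}}T^*_{\mathrm{sequential}}(K,\boldsymbol{\mathcal M},\boldsymbol{\mathcal W})=T^*_{\mathrm{sequential}}\}$; $T^*_{\mathrm{sequential}}$ is said to be achievable with a finite number of servers if this minimum exists. *)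

theory Defs
  imports Complex_Main
begin

text \<open>Indexing conventions: output functions q are 0..Q-1, files n are 0..N-1,
servers k are 0..K-1.  An intermediate value v q n is a bit string of length T
(an element of the field with 2^T elements, viewed as T bits).\<close>

type_synonym ivals = "nat \<Rightarrow> nat \<Rightarrow> bool list"

definition realization :: "nat \<Rightarrow> nat \<Rightarrow> nat \<Rightarrow> ivals \<Rightarrow> bool" where
  "realization Q N T v \<longleftrightarrow> (\<forall>q<Q. \<forall>n<N. length (v q n) = T)"

definition assignment_ok ::
  "nat \<Rightarrow> nat \<Rightarrow> nat \<Rightarrow> (nat \<Rightarrow> nat set) \<Rightarrow> (nat \<Rightarrow> nat set) \<Rightarrow> bool" where
  "assignment_ok Q N K M W \<longleftrightarrow>
     (\<forall>k<K. M k \<subseteq> {..<N}) \<and> (\<Union>k<K. M k) = {..<N} \<and>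
     (\<forall>k<K. W k \<subseteq> {..<Q}) \<and> (\<Union>k<K. W k) = {..<Q} \<and>
     (\<forall>k<K. \<forall>j<K. k \<noteq> j \<longrightarrow> W k \<inter> W j = {})"

text \<open>A shuffling scheme: server k sends a message psi k v of l k bits, which
depends only on its locally mapped intermediate values, multicast to the set D k
of other servers.  Validity: for every realization, each server can decode
all v q n with q in W k from its local values and the messages it receives
(i.e. two realizations indistinguishable to server k agree on those values).\<close>
definition valid_shuffle ::
  "nat \<Rightarrow> nat \<Rightarrow> nat \<Rightarrow> nat \<Rightarrow> (nat \<Rightarrow> nat set) \<Rightarrow> (nat \<Rightarrow> nat set) \<Rightarrow>
   (nat \<Rightarrow> nat) \<Rightarrow> (nat \<Rightarrow> ivals \<Rightarrow> bool list) \<Rightarrow> (nat \<Rightarrow> nat set) \<Rightarrow> bool" where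
  "valid_shuffle Q N T K M W l psi D \<longleftrightarrow>
     (\<forall>k<K. D k \<subseteq> {..<K} - {k}) \<and>
     (\<forall>k<K. \<forall>v. realization Q N T v \<longrightarrow> length (psi k v) = l k) \<and>
     (\<forall>k<K. \<forall>v v'. realization Q N T v \<longrightarrow> realization Q N T v' \<longrightarrow>
        (\<forall>q<Q. \<forall>n\<in>M k. v q n = v' q n) \<longrightarrow> psi k v = psi k v') \<and>
     (\<forall>k<K. \<forall>v v'. realization Q N T v \<longrightarrow> realization Q N T v' \<longrightarrow>
        (\<forall>q<Q. \<forall>n\<in>M k. v q n = v' q n) \<longrightarrow>
        (\<forall>j<K. k \<in> D j \<longrightarrow> psi j v = psi j v') \<longrightarrow>
        (\<forall>q\<in>W k. \<forall>n<N. v q n = v' q n))"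

definition min_load ::
  "nat \<Rightarrow> nat \<Rightarrow> nat \<Rightarrow> nat \<Rightarrow> (nat \<Rightarrow> nat set) \<Rightarrow> (nat \<Rightarrow> nat set) \<Rightarrow> real" where
  "min_load Q N T K M W =
     Inf {real (\<Sum>k<K. l k) / real (Q * N * T) | l psi D. valid_shuffle Q N T K M W l psi D}"

definition T_seq ::
  "real \<Rightarrow> real \<Rightarrow> real \<Rightarrow> nat \<Rightarrow> nat \<Rightarrow> nat \<Rightarrow> nat \<Rightarrow>
   (nat \<Rightarrow> nat set) \<Rightarrow> (nat \<Rightarrow> nat set) \<Rightarrow> real" where
  "T_seq cm cs cr Q T N K M W =
     cm * (real (Max ((\<lambda>k. card (M k)) ` {..<K})) / real N)
     + cs * min_load Q N T K M W
     + cr * real (Max ((\<lambda>k. card (W k)) ` {..<K}))"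

text \<open>Optimal execution time: infimum over the number of files N (large N regime),
the number of servers K and the Map/Reduce assignments.\<close>
definition T_seq_opt :: "real \<Rightarrow> real \<Rightarrow> real \<Rightarrow> nat \<Rightarrow> nat \<Rightarrow> real" where
  "T_seq_opt cm cs cr Q T =
     Inf {T_seq cm cs cr Q T N K M W | N K M W. N \<ge> 1 \<and> assignment_ok Q N K M W}"

definition achieves_opt :: "real \<Rightarrow> real \<Rightarrow> real \<Rightarrow> nat \<Rightarrow> nat \<Rightarrow> nat \<Rightarrow> bool" where
  "achieves_opt cm cs cr Q T K \<longleftrightarrow>
     (\<exists>N M W. N \<ge> 1 \<and> assignment_ok Q N K M W \<and>
        T_seq cm cs cr Q T N K M W = T_seq_opt cm cs cr Q T)"

definition cost_r :: "real \<Rightarrow> real \<Rightarrow> nat \<Rightarrow> nat \<Rightarrow> real" where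
  "cost_r cm cs Q r = cm * real r / real Q + cs * (real Q - real r) / (real Q * (real r + 1))"

definition r_star :: "real \<Rightarrow> real \<Rightarrow> nat \<Rightarrow> nat" where
  "r_star cm cs Q = Max {r \<in> {0..Q}. \<forall>r'\<in>{0..Q}. cost_r cm cs Q r \<le> cost_r cm cs Q r'}"

end

(*
  Fix the Map and Reduce assignments and let s_n be the number of Reduce functions
  whose Reduce server has mapped file n. Going through the functions in some order
  and counting the message tuples compatible with partially known intermediate
  values shows that T bits must be sent for every value v q n whose file is mapped
  neither by the Reduce server of q nor by that of an earlier function; averaged
  over all orders this is T (Q - s_n)/(s_n + 1) bits per file. So Map and Shuffle
  time together are at least the mean over the files of cost_r(s_n) >= cost_r(r_star),
  and the Reduce time is at least c_r.

  At equality each server reduces at most one function, s_n <= r_star, the Map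
  load is at most r_star/Q, and some optimal shuffling lets the Reduce servers send
  nothing. Hence r_star > 0, and if r_star < Q every file must also be mapped by
  one of the K - Q servers that reduce nothing, which forces
  K >= Q + ceil(Q/r_star). Conversely, ceil(Q/r) helper servers multicasting
  parities of r + 1 intermediate values attain cost_r(r) + c_r, r_star = Q needs no
  communication, and for r_star = 0 uncoded shuffling approaches c_s + c_r as N
  grows.
*)
theory Submission
  imports Defs "HOL-Library.FuncSet"
begin

lemma card_bit_strings: "card {xs :: bool list. length xs = n} = 2 ^ n"
  using card_lists_length_eq[of "UNIV :: bool set" n] by simp

lemma finite_bit_strings: "finite {xs :: bool list. length xs = n}"
  using finite_lists_length_eq[of "UNIV :: bool set" n] by simp

lemma concat_map_eq_imp_map_eq:
  assumes "concat (map f xs) = concat (map g xs)"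
    and "\<And>x. x \<in> set xs \<Longrightarrow> length (f x) = length (g x)"
  shows "map f xs = map g xs"
  using assms by (intro concat_injective) (auto simp: zip_map_map zip_same_conv_map)

lemma length_concat_map_const:
  "(\<And>x. x \<in> set xs \<Longrightarrow> length (f x) = c) \<Longrightarrow> length (concat (map f xs)) = length xs * c"
  by (induction xs) auto

lemma eq_at_point_if_parity_eq:
  assumes U: "finite U" and k: "k \<in> U" and others: "\<forall>x\<in>U - {k}. P x = P' x"
    and parity: "odd (card {x\<in>U. P x}) = odd (card {x\<in>U. P' x})"
  shows "P k = P' k"
proof -
  have split: "card {x\<in>U. R x} = card {x\<in>U - {k}. R x} + (if R k then 1 else 0)" for R
  proof -
    have "{x\<in>U. R x} = (if R k then insert k {x\<in>U - {k}. R x} else {x\<in>U - {k}. R x})"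
      using k by auto
    then show ?thesis using U by simp
  qed
  have "{x\<in>U - {k}. P x} = {x\<in>U - {k}. P' x}" using others by auto
  then show ?thesis using parity split[of P] split[of P'] by (cases "P k"; cases "P' k") auto
qed

lemma card_subsets_containing:
  assumes k: "k < Q" and r: "1 \<le> r"
  shows "card {S. S \<subseteq> {..<Q} \<and> card S = r \<and> k \<in> S} = (Q - 1) choose (r - 1)"
proof -
  define A where "A = {S. S \<subseteq> {..<Q} - {k} \<and> card S = r - 1}"
  have "{S. S \<subseteq> {..<Q} \<and> card S = r \<and> k \<in> S} = insert k ` A"
  proof (intro equalityI subsetI)
    fix S assume S: "S \<in> {S. S \<subseteq> {..<Q} \<and> card S = r \<and> k \<in> S}"
    then have "finite S" using finite_subset[of S "{..<Q}"] by simp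
    then have "S - {k} \<in> A" using S unfolding A_def by auto
    moreover have "S = insert k (S - {k})" using S by auto
    ultimately show "S \<in> insert k ` A" by blast
  next
    fix S assume "S \<in> insert k ` A"
    then obtain S' where S': "S' \<in> A" "S = insert k S'" by blast
    then have "finite S'" "k \<notin> S'" unfolding A_def using finite_subset[of S' "{..<Q}"] by auto
    then show "S \<in> {S. S \<subseteq> {..<Q} \<and> card S = r \<and> k \<in> S}"
      using S' k r unfolding A_def by auto
  qed
  moreover have "inj_on (insert k) A"
    unfolding A_def by (rule inj_onI) (metis Diff_insert_absorb Diff_iff insertI1 mem_Collect_eq subsetD)
  moreover have "card A = (Q - 1) choose (r - 1)"
    unfolding A_def using n_subsets[of "{..<Q} - {k}" "r - 1"] k by simp
  ultimately show ?thesis by (simp add: card_image)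
qed

lemma assignment_ok_Map_subset: "assignment_ok Q N K M W \<Longrightarrow> k < K \<Longrightarrow> M k \<subseteq> {..<N}"
  by (simp add: assignment_ok_def)

lemma assignment_ok_finite_Map: "assignment_ok Q N K M W \<Longrightarrow> k < K \<Longrightarrow> finite (M k)"
  by (meson assignment_ok_Map_subset finite_lessThan finite_subset)

lemma assignment_ok_Map_cover: "assignment_ok Q N K M W \<Longrightarrow> n < N \<Longrightarrow> \<exists>k<K. n \<in> M k"
  unfolding assignment_ok_def by (metis UN_E lessThan_iff)

lemma assignment_ok_Reduce_subset: "assignment_ok Q N K M W \<Longrightarrow> k < K \<Longrightarrow> W k \<subseteq> {..<Q}"
  by (simp add: assignment_ok_def)

lemma assignment_ok_Reduce_cover: "assignment_ok Q N K M W \<Longrightarrow> q < Q \<Longrightarrow> \<exists>k<K. q \<in> W k"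
  unfolding assignment_ok_def by (metis UN_E lessThan_iff)

definition reducer :: "nat \<Rightarrow> (nat \<Rightarrow> nat set) \<Rightarrow> nat \<Rightarrow> nat" where
  "reducer K W q = (SOME k. k < K \<and> q \<in> W k)"

lemma reducer:
  assumes "assignment_ok Q N K M W" and "q < Q"
  shows "reducer K W q < K" and "q \<in> W (reducer K W q)"
proof -
  have "\<exists>k. k < K \<and> q \<in> W k" using assignment_ok_Reduce_cover[OF assms] by blast
  then show "reducer K W q < K" "q \<in> W (reducer K W q)"
    unfolding reducer_def by (metis (mono_tags, lifting) someI_ex)+
qed

section \<open>Orders of the Reduce functions\<close>

text \<open>With P q the files mapped by the Reduce server of q, unseen counts, going
  through L, the values v q n whose file is mapped neither by that server nor by those
  of earlier functions; each of them costs T fresh bits of messages.\<close>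
fun unseen :: "(nat \<Rightarrow> nat set) \<Rightarrow> nat \<Rightarrow> nat set \<Rightarrow> nat list \<Rightarrow> nat" where
  "unseen P N A [] = 0"
| "unseen P N A (q # L) = card ({..<N} - A - P q) + unseen P N (A \<union> P q) L"

definition unseen_weight :: "nat \<Rightarrow> nat \<Rightarrow> real" where
  "unseen_weight m s = (real m - real s) / (real s + 1)"

text \<open>The mean of unseen P N A L over the orders L of R: a file outside A lying in
  P q for exactly s of the m elements q of R is counted once for every other element
  placed before all s of them, that is (m - s)/(s + 1) times on average.\<close>
definition avg_unseen :: "(nat \<Rightarrow> nat set) \<Rightarrow> nat \<Rightarrow> nat set \<Rightarrow> nat set \<Rightarrow> real" where
  "avg_unseen P N A R = (\<Sum>n\<in>{..<N} - A. unseen_weight (card R) (card {q\<in>R. n \<in> P q}))"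

lemma card_filter_sum: "finite B \<Longrightarrow> real (card {x\<in>B. P x}) = (\<Sum>x\<in>B. if P x then 1 else 0)"
  by (simp add: sum.If_cases Int_def)

lemma unseen_weight_step:
  assumes "1 \<le> m" and "s \<le> m"
  shows "(1 + unseen_weight (m - 1) s) * (real m - real s) = real m * unseen_weight m s"
  using assms unfolding unseen_weight_def by (simp add: of_nat_diff field_simps)

lemma avg_unseen_remove:
  assumes "finite R" and "k \<in> R"
  shows "avg_unseen P N (A \<union> P k) (R - {k})
    = (\<Sum>n\<in>{..<N} - A. if n \<notin> P k then unseen_weight (card R - 1) (card {q\<in>R. n \<in> P q}) else 0)"
proof -
  have "(\<Sum>n\<in>{..<N} - A. if n \<notin> P k then unseen_weight (card R - 1) (card {q\<in>R. n \<in> P q}) else 0)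
      = (\<Sum>n\<in>{n \<in> {..<N} - A. n \<notin> P k}. unseen_weight (card R - 1) (card {q\<in>R. n \<in> P q}))"
    by (rule sum.inter_filter[symmetric]) simp
  also have "{n \<in> {..<N} - A. n \<notin> P k} = {..<N} - (A \<union> P k)" by auto
  also have "(\<Sum>n\<in>{..<N} - (A \<union> P k). unseen_weight (card R - 1) (card {q\<in>R. n \<in> P q}))
      = avg_unseen P N (A \<union> P k) (R - {k})"
    unfolding avg_unseen_def
  proof (rule sum.cong[OF refl])
    fix n assume "n \<in> {..<N} - (A \<union> P k)"
    then have "{q\<in>R - {k}. n \<in> P q} = {q\<in>R. n \<in> P q}" by auto
    then show "unseen_weight (card R - 1) (card {q\<in>R. n \<in> P q})
        = unseen_weight (card (R - {k})) (card {q\<in>R - {k}. n \<in> P q})"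
      using assms by simp
  qed
  finally show ?thesis ..
qed

lemma sum_unseen_weight_nonholders:
  assumes fR: "finite R" and ne: "R \<noteq> {}"
  shows "(\<Sum>k\<in>R. if n \<notin> P k then 1 + unseen_weight (card R - 1) (card {q\<in>R. n \<in> P q}) else 0)
    = real (card R) * unseen_weight (card R) (card {q\<in>R. n \<in> P q})"
proof -
  define s where "s = card {q\<in>R. n \<in> P q}"
  have s: "s \<le> card R" unfolding s_def by (rule card_mono[OF fR]) auto
  have "{k\<in>R. n \<notin> P k} = R - {q\<in>R. n \<in> P q}" by auto
  then have "card {k\<in>R. n \<notin> P k} = card R - s" unfolding s_def by (simp add: card_Diff_subset fR)
  then have "(\<Sum>k\<in>R. if n \<notin> P k then 1 + unseen_weight (card R - 1) s else 0)
      = (1 + unseen_weight (card R - 1) s) * (real (card R) - real s)"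
    using card_filter_sum[OF fR, of "\<lambda>k. n \<notin> P k"] s
    by (simp add: sum_distrib_left if_distrib mult.commute of_nat_diff cong: if_cong)
  also have "\<dots> = real (card R) * unseen_weight (card R) s"
    using fR ne s by (intro unseen_weight_step) (simp_all add: Suc_leI card_gt_0_iff)
  finally show ?thesis unfolding s_def .
qed

lemma avg_unseen_first_step:
  assumes fR: "finite R" and ne: "R \<noteq> {}"
  shows "(\<Sum>k\<in>R. real (card ({..<N} - A - P k)) + avg_unseen P N (A \<union> P k) (R - {k}))
         = real (card R) * avg_unseen P N A R"
proof -
  define w where "w n = unseen_weight (card R - 1) (card {q\<in>R. n \<in> P q})" for n
  have first: "real (card ({..<N} - A - P k)) = (\<Sum>n\<in>{..<N} - A. if n \<notin> P k then 1 else 0)" for k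
  proof -
    have "{..<N} - A - P k = {n \<in> {..<N} - A. n \<notin> P k}" by auto
    then show ?thesis using card_filter_sum[of "{..<N} - A" "\<lambda>n. n \<notin> P k"] by simp
  qed
  have "(\<Sum>k\<in>R. real (card ({..<N} - A - P k)) + avg_unseen P N (A \<union> P k) (R - {k}))
      = (\<Sum>k\<in>R. \<Sum>n\<in>{..<N} - A. if n \<notin> P k then 1 + w n else 0)"
    unfolding w_def
    by (rule sum.cong[OF refl])
      (simp add: first avg_unseen_remove[OF fR] sum.distrib[symmetric] if_distrib cong: if_cong)
  also have "\<dots> = (\<Sum>n\<in>{..<N} - A. \<Sum>k\<in>R. if n \<notin> P k then 1 + w n else 0)"
    by (rule sum.swap)
  also have "\<dots> = real (card R) * avg_unseen P N A R"
    unfolding w_def sum_unseen_weight_nonholders[OF fR ne] avg_unseen_def by (simp add: sum_distrib_left)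
  finally show ?thesis .
qed

text \<open>Choosing each next element greedily, i.e. not below the average, realises
  the average by an actual order.\<close>
lemma exists_order_unseen_ge_avg:
  assumes "finite R"
  shows "\<exists>L. distinct L \<and> set L = R \<and> avg_unseen P N A R \<le> real (unseen P N A L)"
  using assms
proof (induction R arbitrary: A rule: finite_remove_induct)
  case empty
  then show ?case by (auto simp: avg_unseen_def unseen_weight_def intro!: exI[of _ "[]"])
next
  case (remove R)
  define f where "f k = real (card ({..<N} - A - P k)) + avg_unseen P N (A \<union> P k) (R - {k})" for k
  have "\<exists>k\<in>R. avg_unseen P N A R \<le> f k"
  proof (rule ccontr)
    assume "\<not> (\<exists>k\<in>R. avg_unseen P N A R \<le> f k)"
    then have "sum f R < (\<Sum>k\<in>R. avg_unseen P N A R)"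
      by (intro sum_strict_mono) (use remove in auto)
    then show False using avg_unseen_first_step[OF remove(1,2), of N A P] unfolding f_def by simp
  qed
  then obtain k where k: "k \<in> R" "avg_unseen P N A R \<le> f k" by blast
  obtain L where L: "distinct L" "set L = R - {k}"
    "avg_unseen P N (A \<union> P k) (R - {k}) \<le> real (unseen P N (A \<union> P k) L)"
    using remove(4)[OF k(1)] by blast
  show ?case
    by (rule exI[of _ "k # L"]) (use k L in \<open>auto simp: f_def\<close>)
qed

lemma exists_orders_unseen_ge_avg:
  assumes fR: "finite R"
  shows "\<exists>Ls. (\<forall>k\<in>R. distinct (k # Ls k) \<and> set (k # Ls k) = R)
     \<and> real (card R) * avg_unseen P N A R \<le> (\<Sum>k\<in>R. real (unseen P N A (k # Ls k)))"
proof -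
  have "\<forall>k. \<exists>L. distinct L \<and> set L = R - {k}
      \<and> avg_unseen P N (A \<union> P k) (R - {k}) \<le> real (unseen P N (A \<union> P k) L)"
    using exists_order_unseen_ge_avg fR by blast
  then obtain Ls where Ls: "\<And>k. distinct (Ls k) \<and> set (Ls k) = R - {k}
      \<and> avg_unseen P N (A \<union> P k) (R - {k}) \<le> real (unseen P N (A \<union> P k) (Ls k))"
    by metis
  have "real (card R) * avg_unseen P N A R \<le> (\<Sum>k\<in>R. real (unseen P N A (k # Ls k)))"
  proof (cases "R = {}")
    case False
    then have "real (card R) * avg_unseen P N A R
        = (\<Sum>k\<in>R. real (card ({..<N} - A - P k)) + avg_unseen P N (A \<union> P k) (R - {k}))"
      using avg_unseen_first_step[OF fR] by simp
    also have "\<dots> \<le> (\<Sum>k\<in>R. real (unseen P N A (k # Ls k)))"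
      by (rule sum_mono) (use Ls in simp)
    finally show ?thesis .
  qed simp
  with Ls show ?thesis by (intro exI[of _ Ls]) auto
qed

section \<open>Counting message tuples\<close>

definition agree_on :: "(nat \<times> nat) set \<Rightarrow> ivals \<Rightarrow> ivals \<Rightarrow> bool" where
  "agree_on F v w \<longleftrightarrow> (\<forall>q n. (q, n) \<in> F \<longrightarrow> v q n = w q n)"

definition override_row :: "ivals \<Rightarrow> nat \<Rightarrow> nat set \<Rightarrow> (nat \<Rightarrow> bool list) \<Rightarrow> ivals" where
  "override_row w q Dn b = w(q := (\<lambda>n. if n \<in> Dn then b n else w q n))"

locale valid_scheme =
  fixes Q N T K :: nat and M W :: "nat \<Rightarrow> nat set" and l :: "nat \<Rightarrow> nat"
    and psi :: "nat \<Rightarrow> ivals \<Rightarrow> bool list" and D :: "nat \<Rightarrow> nat set"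
  assumes valid: "valid_shuffle Q N T K M W l psi D"
    and assignment: "assignment_ok Q N K M W"
begin

abbreviation reducer_files :: "nat \<Rightarrow> nat set" where
  "reducer_files q \<equiv> M (reducer K W q)"

lemma length_msg: "k < K \<Longrightarrow> realization Q N T v \<Longrightarrow> length (psi k v) = l k"
  using valid unfolding valid_shuffle_def by (elim conjE) blast

lemma msg_local:
  assumes k: "k < K" and v: "realization Q N T v" and v': "realization Q N T v'"
    and agree: "agree_on ({..<Q} \<times> M k) v v'"
  shows "psi k v = psi k v'"
proof -
  have local: "\<forall>q<Q. \<forall>n\<in>M k. v q n = v' q n" using agree by (auto simp: agree_on_def)
  have "\<forall>k<K. \<forall>v v'. realization Q N T v \<longrightarrow> realization Q N T v' \<longrightarrow>
      (\<forall>q<Q. \<forall>n\<in>M k. v q n = v' q n) \<longrightarrow> psi k v = psi k v'"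
    using valid unfolding valid_shuffle_def by (elim conjE)
  then show ?thesis using k v v' local by blast
qed

lemma decodable:
  assumes k: "k < K" and v: "realization Q N T v" and v': "realization Q N T v'"
    and agree: "agree_on ({..<Q} \<times> M k) v v'"
    and received: "\<forall>j<K. k \<in> D j \<longrightarrow> psi j v = psi j v'"
    and q: "q \<in> W k" and n: "n < N"
  shows "v q n = v' q n"
proof -
  have local: "\<forall>q<Q. \<forall>n\<in>M k. v q n = v' q n" using agree by (auto simp: agree_on_def)
  have "\<forall>k<K. \<forall>v v'. realization Q N T v \<longrightarrow> realization Q N T v' \<longrightarrow>
      (\<forall>q<Q. \<forall>n\<in>M k. v q n = v' q n) \<longrightarrow>
      (\<forall>j<K. k \<in> D j \<longrightarrow> psi j v = psi j v') \<longrightarrow>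
      (\<forall>q\<in>W k. \<forall>n<N. v q n = v' q n)"
    using valid unfolding valid_shuffle_def by (elim conjE)
  then show ?thesis using k v v' local received q n by blast
qed

definition msgs :: "nat set \<Rightarrow> ivals \<Rightarrow> nat \<Rightarrow> bool list" where
  "msgs S v = restrict (\<lambda>j. psi j v) S"

definition consistent :: "nat set \<Rightarrow> (nat \<times> nat) set \<Rightarrow> ivals \<Rightarrow> (nat \<Rightarrow> bool list) set" where
  "consistent S F w = {msgs S v | v. realization Q N T v \<and> agree_on F v w}"

lemma consistent_subset_PiE:
  assumes "S \<subseteq> {..<K}"
  shows "consistent S F w \<subseteq> (\<Pi>\<^sub>E j\<in>S. {xs. length xs = l j})"
  using assms length_msg by (auto simp: consistent_def msgs_def)

lemma finite_PiE_bit_strings: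
  "finite S \<Longrightarrow> finite (\<Pi>\<^sub>E j\<in>S. {xs :: bool list. length xs = f j})"
  by (intro finite_PiE) (auto simp: finite_bit_strings)

lemma finite_consistent: "S \<subseteq> {..<K} \<Longrightarrow> finite (consistent S F w)"
  by (rule finite_subset[OF consistent_subset_PiE finite_PiE_bit_strings])
    (auto intro: finite_subset[of _ "{..<K}"])

lemma card_consistent_le:
  assumes "S \<subseteq> {..<K}"
  shows "card (consistent S F w) \<le> 2 ^ (\<Sum>j\<in>S. l j)"
proof -
  have fin: "finite S" using assms by (rule finite_subset) simp
  have "card (consistent S F w) \<le> card (\<Pi>\<^sub>E j\<in>S. {xs :: bool list. length xs = l j})"
    by (rule card_mono[OF finite_PiE_bit_strings[OF fin] consistent_subset_PiE[OF assms]])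
  also have "\<dots> = 2 ^ (\<Sum>j\<in>S. l j)"
    using fin by (simp add: card_PiE card_bit_strings power_sum)
  finally show ?thesis .
qed

lemma card_consistent_pos:
  assumes "S \<subseteq> {..<K}" and "realization Q N T w"
  shows "1 \<le> card (consistent S F w)"
proof -
  have "msgs S w \<in> consistent S F w"
    using assms(2) unfolding consistent_def agree_on_def by auto
  then show ?thesis
    using finite_consistent[OF assms(1)] by (metis One_nat_def Suc_leI card_gt_0_iff empty_iff)
qed

lemma consistent_antimono: "F \<subseteq> F' \<Longrightarrow> consistent S F' w \<subseteq> consistent S F w"
  unfolding consistent_def agree_on_def by blast

lemma decode_from_msgs:
  assumes v: "realization Q N T v" and v': "realization Q N T v'"
    and agree: "agree_on F v v'" and red: "{..<Q} \<times> reducer_files q \<subseteq> F"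
    and others: "\<forall>j<K. j \<notin> S \<longrightarrow> {..<Q} \<times> M j \<subseteq> F"
    and msgs_eq: "msgs S v = msgs S v'" and q: "q < Q" and n: "n < N"
  shows "v q n = v' q n"
proof -
  have agree_local: "agree_on ({..<Q} \<times> M j) v v'" if "{..<Q} \<times> M j \<subseteq> F" for j
    using agree that unfolding agree_on_def by blast
  have psi_eq: "psi j v = psi j v'" if j: "j < K" for j
  proof (cases "j \<in> S")
    case True
    then show ?thesis using fun_cong[OF msgs_eq, of j] unfolding msgs_def by simp
  next
    case False
    then show ?thesis using others j by (intro msg_local[OF j v v'] agree_local) blast
  qed
  show ?thesis
    by (rule decodable[OF reducer(1)[OF assignment q] v v' agree_local[OF red] _
          reducer(2)[OF assignment q] n]) (use psi_eq in blast)
qed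

lemma agree_on_override_row:
  "\<forall>n\<in>Dn. (q, n) \<notin> F \<Longrightarrow> agree_on F (override_row w q Dn b) w"
  unfolding agree_on_def override_row_def by auto

lemma consistent_override_row_disjoint:
  assumes q: "q < Q" and Dn: "Dn \<subseteq> {..<N}" and fresh: "\<forall>n\<in>Dn. (q, n) \<notin> F"
    and red: "{..<Q} \<times> reducer_files q \<subseteq> F"
    and others: "\<forall>j<K. j \<notin> S \<longrightarrow> {..<Q} \<times> M j \<subseteq> F"
    and n: "n \<in> Dn" and ne: "b n \<noteq> b' n"
  shows "consistent S (F \<union> {q} \<times> Dn) (override_row w q Dn b)
    \<inter> consistent S (F \<union> {q} \<times> Dn) (override_row w q Dn b') = {}"
proof (rule ccontr)
  assume "consistent S (F \<union> {q} \<times> Dn) (override_row w q Dn b)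
    \<inter> consistent S (F \<union> {q} \<times> Dn) (override_row w q Dn b') \<noteq> {}"
  then obtain v v' where v: "realization Q N T v" "agree_on (F \<union> {q} \<times> Dn) v (override_row w q Dn b)"
    and v': "realization Q N T v'" "agree_on (F \<union> {q} \<times> Dn) v' (override_row w q Dn b')"
    and msgs_eq: "msgs S v = msgs S v'"
    unfolding consistent_def by auto
  have "agree_on F v v'"
    using v(2) v'(2) agree_on_override_row[OF fresh, of w b] agree_on_override_row[OF fresh, of w b']
    unfolding agree_on_def by auto
  then have "v q n = v' q n"
    using decode_from_msgs[OF v(1) v'(1) _ red others msgs_eq q] n Dn by auto
  moreover have "v q n = b n" "v' q n = b' n"
    using v(2) v'(2) n unfolding agree_on_def override_row_def by auto
  ultimately show False using ne by simp
qed

text \<open>Branching on the 2^T possible values of each v q n with n in Dn leaves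
  pairwise disjoint sets of consistent message tuples.\<close>
lemma card_consistent_branch:
  assumes q: "q < Q" and Dn: "Dn \<subseteq> {..<N}" and fresh: "\<forall>n\<in>Dn. (q, n) \<notin> F"
    and red: "{..<Q} \<times> reducer_files q \<subseteq> F"
    and others: "\<forall>j<K. j \<notin> S \<longrightarrow> {..<Q} \<times> M j \<subseteq> F" and S: "S \<subseteq> {..<K}"
    and w: "realization Q N T w"
    and Y: "\<And>w'. realization Q N T w' \<Longrightarrow> Y \<le> card (consistent S (F \<union> {q} \<times> Dn) w')"
  shows "2 ^ (T * card Dn) * Y \<le> card (consistent S F w)"
proof -
  define Bs where "Bs = (\<Pi>\<^sub>E n\<in>Dn. {b :: bool list. length b = T})"
  define C where "C b = consistent S (F \<union> {q} \<times> Dn) (override_row w q Dn b)" for b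
  have finDn: "finite Dn" using Dn by (rule finite_subset) simp
  have finC: "finite (C b)" for b
    unfolding C_def by (rule finite_consistent[OF S])
  have real: "realization Q N T (override_row w q Dn b)" if "b \<in> Bs" for b
    using w that q Dn unfolding realization_def override_row_def Bs_def by (auto simp: PiE_iff)
  have sub: "C b \<subseteq> consistent S F w" for b
  proof
    fix x assume "x \<in> C b"
    then obtain v where "x = msgs S v" "realization Q N T v"
      "agree_on (F \<union> {q} \<times> Dn) v (override_row w q Dn b)"
      unfolding C_def consistent_def by auto
    moreover have "agree_on F v w"
      using calculation(3) agree_on_override_row[OF fresh, of w b] unfolding agree_on_def by auto
    ultimately show "x \<in> consistent S F w" unfolding consistent_def by auto
  qed
  have disj: "C b \<inter> C b' = {}" if b: "b \<in> Bs" and b': "b' \<in> Bs" and ne: "b \<noteq> b'" for b b'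
  proof -
    obtain n where "n \<in> Dn" "b n \<noteq> b' n"
      using ne PiE_ext[OF b[unfolded Bs_def] b'[unfolded Bs_def]] by blast
    then show ?thesis unfolding C_def by (rule consistent_override_row_disjoint[OF q Dn fresh red others])
  qed
  have "2 ^ (T * card Dn) * Y = (\<Sum>b\<in>Bs. Y)"
    using finDn by (simp add: Bs_def card_PiE card_bit_strings power_mult)
  also have "\<dots> \<le> (\<Sum>b\<in>Bs. card (C b))"
    unfolding C_def by (rule sum_mono) (use Y real in auto)
  also have "\<dots> = card (\<Union>b\<in>Bs. C b)"
    by (rule card_UN_disjoint[symmetric])
      (use finDn finC disj in \<open>auto simp: Bs_def finite_PiE_bit_strings\<close>)
  also have "\<dots> \<le> card (consistent S F w)"
    using sub by (intro card_mono[OF finite_consistent[OF S]] UN_least)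
  finally show ?thesis .
qed

lemma card_consistent_ge_unseen:
  assumes "distinct L" and "set L \<subseteq> {..<Q}"
    and "\<forall>q\<in>set L. \<forall>n<N. n \<notin> A \<longrightarrow> (q, n) \<notin> F"
    and "L \<noteq> [] \<longrightarrow> (\<forall>j<K. j \<notin> S \<longrightarrow> {..<Q} \<times> M j \<subseteq> F \<union> {..<Q} \<times> reducer_files (hd L))"
    and "S \<subseteq> {..<K}" and "realization Q N T w"
  shows "2 ^ (T * unseen reducer_files N A L) \<le> card (consistent S F w)"
  using assms
proof (induction L arbitrary: A F w)
  case Nil
  then show ?case using card_consistent_pos by simp
next
  case (Cons q L)
  define Dn where "Dn = {..<N} - A - reducer_files q"
  define F1 where "F1 = F \<union> {..<Q} \<times> reducer_files q"
  have "2 ^ (T * card Dn) * 2 ^ (T * unseen reducer_files N (A \<union> reducer_files q) L)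
      \<le> card (consistent S F1 w)"
  proof (rule card_consistent_branch)
    show "\<And>w'. realization Q N T w' \<Longrightarrow> 2 ^ (T * unseen reducer_files N (A \<union> reducer_files q) L)
        \<le> card (consistent S (F1 \<union> {q} \<times> Dn) w')"
      by (rule Cons.IH) (use Cons.prems in \<open>auto simp: F1_def Dn_def\<close>)
  qed (use Cons.prems in \<open>auto simp: F1_def Dn_def\<close>)
  also have "\<dots> \<le> card (consistent S F w)"
    by (rule card_mono[OF finite_consistent consistent_antimono]) (use Cons.prems in \<open>auto simp: F1_def\<close>)
  finally show ?case by (simp add: Dn_def power_add distrib_left)
qed

lemma bits_others_ge_unseen:
  assumes "distinct L" and "set L \<subseteq> {..<Q}" and "L \<noteq> []"
  shows "T * unseen reducer_files N {} L \<le> (\<Sum>j\<in>{..<K} - {reducer K W (hd L)}. l j)"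
proof -
  have "2 ^ (T * unseen reducer_files N {} L)
      \<le> card (consistent ({..<K} - {reducer K W (hd L)}) {} (\<lambda>q n. replicate T False))"
    by (rule card_consistent_ge_unseen) (use assms in \<open>auto simp: realization_def\<close>)
  also have "\<dots> \<le> 2 ^ (\<Sum>j\<in>{..<K} - {reducer K W (hd L)}. l j)"
    by (rule card_consistent_le) auto
  finally show ?thesis by (simp add: power_le_imp_le_exp)
qed

lemma bits_ge_unseen:
  assumes "distinct L" and "set L \<subseteq> {..<Q}"
  shows "T * unseen reducer_files N {} L \<le> (\<Sum>j<K. l j)"
proof (cases "L = []")
  case False
  then have "T * unseen reducer_files N {} L \<le> (\<Sum>j\<in>{..<K} - {reducer K W (hd L)}. l j)"
    using bits_others_ge_unseen assms by blast
  also have "\<dots> \<le> (\<Sum>j<K. l j)" by (rule sum_mono2) auto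
  finally show ?thesis .
qed simp

lemma total_bits_ge_avg_unseen:
  "real T * avg_unseen reducer_files N {} {..<Q} \<le> real (\<Sum>j<K. l j)"
proof -
  obtain L where L: "distinct L" "set L = {..<Q}"
    "avg_unseen reducer_files N {} {..<Q} \<le> real (unseen reducer_files N {} L)"
    using exists_order_unseen_ge_avg[of "{..<Q}"] by blast
  have "real T * avg_unseen reducer_files N {} {..<Q} \<le> real T * real (unseen reducer_files N {} L)"
    using L(3) by (simp add: mult_left_mono)
  also have "\<dots> \<le> real (\<Sum>j<K. l j)"
    using bits_ge_unseen[OF L(1)] L(2) by (metis of_nat_le_iff of_nat_mult order_refl)
  finally show ?thesis .
qed

text \<open>Averaging bits_others_ge_unseen over orders starting with each q gives
  Q B \<ge> Q B + (sum over q of the bits sent by q's Reduce server) when the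
  total B attains the bound.\<close>
lemma reducers_silent_if_tight:
  assumes tight: "real (\<Sum>j<K. l j) \<le> real T * avg_unseen reducer_files N {} {..<Q}"
    and q: "q < Q"
  shows "l (reducer K W q) = 0"
proof -
  obtain Ls where Ls: "\<forall>k\<in>{..<Q}. distinct (k # Ls k) \<and> set (k # Ls k) = {..<Q}"
    and avg: "real Q * avg_unseen reducer_files N {} {..<Q}
      \<le> (\<Sum>k<Q. real (unseen reducer_files N {} (k # Ls k)))"
    using exists_orders_unseen_ge_avg[of "{..<Q}" reducer_files N "{}"] by auto
  define B where "B = real (\<Sum>j<K. l j)"
  have each: "real T * real (unseen reducer_files N {} (k # Ls k)) \<le> B - real (l (reducer K W k))"
    if k: "k < Q" for k
  proof -
    have "T * unseen reducer_files N {} (k # Ls k) \<le> (\<Sum>j\<in>{..<K} - {reducer K W k}. l j)"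
      using bits_others_ge_unseen[of "k # Ls k"] Ls k by auto
    moreover have "(\<Sum>j<K. l j) = l (reducer K W k) + (\<Sum>j\<in>{..<K} - {reducer K W k}. l j)"
      by (rule sum.remove) (use reducer(1)[OF assignment k] in auto)
    ultimately have "real (T * unseen reducer_files N {} (k # Ls k) + l (reducer K W k)) \<le> B"
      unfolding B_def by (simp only: of_nat_le_iff)
    then show ?thesis by simp
  qed
  have "real Q * B \<le> real Q * (real T * avg_unseen reducer_files N {} {..<Q})"
    using tight unfolding B_def by (simp add: mult_left_mono)
  also have "\<dots> \<le> (\<Sum>k<Q. real T * real (unseen reducer_files N {} (k # Ls k)))"
    using mult_left_mono[OF avg, of "real T"] by (simp add: sum_distrib_left mult.left_commute)
  also have "\<dots> \<le> (\<Sum>k<Q. B - real (l (reducer K W k)))"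
    by (rule sum_mono) (use each in auto)
  also have "\<dots> = real Q * B - (\<Sum>k<Q. real (l (reducer K W k)))"
    by (simp add: sum_subtractf)
  finally have "real (\<Sum>k<Q. l (reducer K W k)) \<le> 0" by simp
  then have "(\<Sum>k<Q. l (reducer K W k)) = 0" by linarith
  then show ?thesis using q by simp
qed

lemma file_mapped_by_non_reducer:
  assumes silent: "\<forall>q<Q. l (reducer K W q) = 0" and T: "T \<ge> 1"
    and n: "n < N" and q: "q < Q" and missing: "n \<notin> reducer_files q"
  shows "\<exists>j<K. j \<notin> reducer K W ` {..<Q} \<and> n \<in> M j"
proof (rule ccontr)
  assume no_helper: "\<not> (\<exists>j<K. j \<notin> reducer K W ` {..<Q} \<and> n \<in> M j)"
  define v :: ivals where "v = (\<lambda>q n. replicate T False)"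
  define v' :: ivals where "v' = v(q := (v q)(n := replicate T True))"
  have real: "realization Q N T v" "realization Q N T v'"
    unfolding realization_def v'_def v_def by auto
  have psi_eq: "psi j v = psi j v'" if j: "j < K" for j
  proof (cases "j \<in> reducer K W ` {..<Q}")
    case True
    then have "l j = 0" using silent by auto
    then show ?thesis using length_msg[OF j real(1)] length_msg[OF j real(2)] by simp
  next
    case False
    then have "n \<notin> M j" using no_helper j by auto
    then show ?thesis
      by (intro msg_local[OF j real]) (auto simp: agree_on_def v'_def)
  qed
  have "v q n = v' q n"
  proof (rule decodable[OF reducer(1)[OF assignment q] real _ _ reducer(2)[OF assignment q] n])
    show "agree_on ({..<Q} \<times> reducer_files q) v v'"
      using missing by (auto simp: agree_on_def v'_def)
  qed (use psi_eq in blast)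
  moreover have "v q n \<noteq> v' q n" using T by (cases T) (auto simp: v'_def v_def)
  ultimately show False by simp
qed

end

section \<open>Uncoded shuffling\<close>

definition uncoded_msg :: "nat \<Rightarrow> (nat \<Rightarrow> nat set) \<Rightarrow> nat \<Rightarrow> ivals \<Rightarrow> bool list" where
  "uncoded_msg Q M j v =
     concat (map (\<lambda>n. concat (map (\<lambda>q. v q n) [0..<Q])) (sorted_list_of_set (M j)))"

lemma length_all_values:
  "realization Q N T v \<Longrightarrow> n < N \<Longrightarrow> length (concat (map (\<lambda>q. v q n) [0..<Q])) = Q * T"
  using length_concat_map_const[of "[0..<Q]" "\<lambda>q. v q n" T] by (auto simp: realization_def)

lemma length_uncoded_msg:
  assumes "realization Q N T v" and "M j \<subseteq> {..<N}"
  shows "length (uncoded_msg Q M j v) = card (M j) * (Q * T)"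
proof -
  have "finite (M j)" using assms(2) by (rule finite_subset) simp
  then show ?thesis
    unfolding uncoded_msg_def using assms length_all_values
    by (subst length_concat_map_const[where c = "Q * T"]) auto
qed

lemma uncoded_msg_local:
  "\<forall>q<Q. \<forall>n\<in>M k. v q n = v' q n \<Longrightarrow> uncoded_msg Q M k v = uncoded_msg Q M k v'"
  unfolding uncoded_msg_def
  by (intro arg_cong[where f = concat] map_cong refl) (cases "finite (M k)"; auto)

lemma uncoded_msg_decodable:
  assumes "realization Q N T v" and "realization Q N T v'" and "M j \<subseteq> {..<N}"
    and "uncoded_msg Q M j v = uncoded_msg Q M j v'" and "n \<in> M j" and "q < Q"
  shows "v q n = v' q n"
proof -
  have fin: "finite (M j)" using assms(3) by (rule finite_subset) simp
  have "map (\<lambda>n. concat (map (\<lambda>q. v q n) [0..<Q])) (sorted_list_of_set (M j))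
      = map (\<lambda>n. concat (map (\<lambda>q. v' q n) [0..<Q])) (sorted_list_of_set (M j))"
    using assms(4) unfolding uncoded_msg_def
    by (rule concat_map_eq_imp_map_eq) (use fin assms(1-3) length_all_values in auto)
  then have "concat (map (\<lambda>q. v q n) [0..<Q]) = concat (map (\<lambda>q. v' q n) [0..<Q])"
    using assms(5) fin by (auto simp: map_eq_conv)
  then have "map (\<lambda>q. v q n) [0..<Q] = map (\<lambda>q. v' q n) [0..<Q]"
    by (rule concat_map_eq_imp_map_eq) (use assms(1-3,5) in \<open>auto simp: realization_def\<close>)
  then show ?thesis using assms(6) by (simp add: map_eq_conv)
qed

lemma valid_shuffle_uncoded:
  assumes ao: "assignment_ok Q N K M W"
  shows "valid_shuffle Q N T K M W (\<lambda>j. card (M j) * (Q * T)) (uncoded_msg Q M) (\<lambda>j. {..<K} - {j})"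
  unfolding valid_shuffle_def
proof (intro conjI allI impI ballI)
  show "length (uncoded_msg Q M k v) = card (M k) * (Q * T)"
    if "k < K" and "realization Q N T v" for k v
    by (rule length_uncoded_msg[OF that(2)]) (rule assignment_ok_Map_subset[OF ao that(1)])
  fix k v v' q n
  assume k: "k < K" and v: "realization Q N T v" and v': "realization Q N T v'"
    and agree: "\<forall>q<Q. \<forall>n\<in>M k. v q n = v' q n"
    and received: "\<forall>j<K. k \<in> {..<K} - {j} \<longrightarrow> uncoded_msg Q M j v = uncoded_msg Q M j v'"
    and q: "q \<in> W k" and n: "n < N"
  have qQ: "q < Q" using assignment_ok_Reduce_subset[OF ao k] q by auto
  obtain j where j: "j < K" "n \<in> M j" using assignment_ok_Map_cover[OF ao n] by blast
  show "v q n = v' q n"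
  proof (cases "j = k")
    case True
    then show ?thesis using agree qQ j by auto
  next
    case False
    then have "uncoded_msg Q M j v = uncoded_msg Q M j v'" using received j k by auto
    with v v' assignment_ok_Map_subset[OF ao j(1)] j(2) qQ show ?thesis
      by (intro uncoded_msg_decodable)
  qed
qed (simp_all add: uncoded_msg_local)

lemma min_load_attained:
  assumes ao: "assignment_ok Q N K M W"
  obtains l psi D where "valid_shuffle Q N T K M W l psi D"
    and "min_load Q N T K M W = real (\<Sum>k<K. l k) / real (Q * N * T)"
proof -
  define bits where "bits = {\<Sum>k<K. l k | l psi D. valid_shuffle Q N T K M W l psi D}"
  have "(\<Sum>k<K. card (M k) * (Q * T)) \<in> bits"
    unfolding bits_def using valid_shuffle_uncoded[OF ao] by blast
  then have "Least (\<lambda>x. x \<in> bits) \<in> bits" by (rule LeastI)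
  then obtain l psi D where valid: "valid_shuffle Q N T K M W l psi D"
    and least: "(\<Sum>k<K. l k) = Least (\<lambda>x. x \<in> bits)"
    unfolding bits_def by auto
  have "min_load Q N T K M W = real (\<Sum>k<K. l k) / real (Q * N * T)"
    unfolding min_load_def
  proof (rule cInf_eq_minimum)
    fix x assume "x \<in> {real (\<Sum>k<K. l k) / real (Q * N * T) | l psi D. valid_shuffle Q N T K M W l psi D}"
    then obtain l' psi' D' where "valid_shuffle Q N T K M W l' psi' D'"
      and x: "x = real (\<Sum>k<K. l' k) / real (Q * N * T)" by blast
    then have "(\<Sum>k<K. l k) \<le> (\<Sum>k<K. l' k)"
      unfolding least by (intro Least_le) (auto simp: bits_def)
    then have "real (\<Sum>k<K. l k) \<le> real (\<Sum>k<K. l' k)" by (simp only: of_nat_le_iff)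
    then show "real (\<Sum>k<K. l k) / real (Q * N * T) \<le> x"
      unfolding x by (intro divide_right_mono) simp_all
  qed (use valid in blast)
  with valid that show ?thesis by blast
qed

lemma min_load_le:
  assumes "valid_shuffle Q N T K M W l psi D"
  shows "min_load Q N T K M W \<le> real (\<Sum>k<K. l k) / real (Q * N * T)"
  unfolding min_load_def
  by (rule cInf_lower) (use assms in \<open>auto intro!: bdd_belowI[of _ 0] divide_nonneg_nonneg sum_nonneg\<close>)

section \<open>The lower bound on the execution time\<close>

lemma cost_r_eq:
  "cost_r cm cs Q s = cm * real s / real Q + cs * unseen_weight Q s / real Q"
  unfolding cost_r_def unseen_weight_def by (simp add: field_simps)

lemma r_star_minimizer:
  "r_star cm cs Q \<in> {r \<in> {0..Q}. \<forall>r'\<in>{0..Q}. cost_r cm cs Q r \<le> cost_r cm cs Q r'}"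
proof -
  obtain r0 where "is_arg_min (cost_r cm cs Q) (\<lambda>r. r \<in> {0..Q}) r0"
    using ex_is_arg_min_if_finite[of "{0..Q}" "cost_r cm cs Q"] by auto
  then have "r0 \<in> {r \<in> {0..Q}. \<forall>r'\<in>{0..Q}. cost_r cm cs Q r \<le> cost_r cm cs Q r'}"
    unfolding is_arg_min_linorder by auto
  then show ?thesis unfolding r_star_def by (intro Max_in) auto
qed

lemma r_star_le: "r_star cm cs Q \<le> Q"
  using r_star_minimizer by simp

lemma cost_r_star_le: "r \<le> Q \<Longrightarrow> cost_r cm cs Q (r_star cm cs Q) \<le> cost_r cm cs Q r"
  using r_star_minimizer by simp

lemma le_r_star:
  assumes "r \<le> Q" and "\<forall>r'\<le>Q. cost_r cm cs Q r \<le> cost_r cm cs Q r'"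
  shows "r \<le> r_star cm cs Q"
  unfolding r_star_def by (rule Max_ge) (use assms in auto)

locale config =
  fixes cm cs cr :: real and Q T N K :: nat and M W :: "nat \<Rightarrow> nat set"
  assumes assignment: "assignment_ok Q N K M W"
    and N: "N \<ge> 1" and Q: "Q \<ge> 1" and T: "T \<ge> 1"
    and cm: "cm > 0" and cs: "cs > 0" and cr: "cr > 0"
begin

abbreviation max_map_load :: nat where
  "max_map_load \<equiv> Max ((\<lambda>k. card (M k)) ` {..<K})"

abbreviation max_reduce_load :: nat where
  "max_reduce_load \<equiv> Max ((\<lambda>k. card (W k)) ` {..<K})"

abbreviation opt_cost :: real where
  "opt_cost \<equiv> cost_r cm cs Q (r_star cm cs Q)"

abbreviation holders :: "nat \<Rightarrow> nat" where
  "holders n \<equiv> card {q \<in> {..<Q}. n \<in> M (reducer K W q)}"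

lemma holders_le: "holders n \<le> Q"
  using card_mono[of "{..<Q}" "{q \<in> {..<Q}. n \<in> M (reducer K W q)}"] by auto

lemma card_Map_le: "k < K \<Longrightarrow> card (M k) \<le> max_map_load"
  by (rule Max_ge) auto

lemma card_Reduce_le: "k < K \<Longrightarrow> card (W k) \<le> max_reduce_load"
  by (rule Max_ge) auto

lemma max_reduce_load_ge_1: "1 \<le> max_reduce_load"
proof -
  have k: "reducer K W 0 < K" "0 \<in> W (reducer K W 0)" using reducer[OF assignment] Q by auto
  have "finite (W (reducer K W 0))"
    using assignment_ok_Reduce_subset[OF assignment k(1)] by (rule finite_subset) simp
  then have "1 \<le> card (W (reducer K W 0))"
    using k(2) by (metis One_nat_def Suc_leI card_gt_0_iff empty_iff)
  also have "\<dots> \<le> max_reduce_load" by (rule card_Reduce_le[OF k(1)])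
  finally show ?thesis .
qed

lemma sum_holders: "(\<Sum>n<N. holders n) = (\<Sum>q<Q. card (M (reducer K W q)))"
proof -
  have "(\<Sum>n<N. holders n) = (\<Sum>q<Q. card {n \<in> {..<N}. n \<in> M (reducer K W q)})"
    by (rule sum_multicount_gen) auto
  also have "\<dots> = (\<Sum>q<Q. card (M (reducer K W q)))"
    using assignment_ok_Map_subset[OF assignment] reducer(1)[OF assignment]
    by (intro sum.cong refl arg_cong[where f = card]) auto
  finally show ?thesis .
qed

lemma avg_holders_le: "(\<Sum>n<N. real (holders n)) / (real Q * real N) \<le> real max_map_load / real N"
proof -
  have "(\<Sum>n<N. holders n) \<le> (\<Sum>q<Q. max_map_load)"
    unfolding sum_holders by (rule sum_mono) (simp add: card_Map_le reducer(1)[OF assignment])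
  then have "(\<Sum>n<N. real (holders n)) \<le> real Q * real max_map_load"
    using of_nat_mono[where 'a = real] by fastforce
  then show ?thesis using N Q by (simp add: field_simps)
qed

lemma bits_ge_weights:
  assumes "valid_shuffle Q N T K M W l psi D"
  shows "real T * (\<Sum>n<N. unseen_weight Q (holders n)) \<le> real (\<Sum>k<K. l k)"
proof -
  interpret valid_scheme Q N T K M W l psi D using assms assignment by unfold_locales
  show ?thesis using total_bits_ge_avg_unseen by (simp add: avg_unseen_def)
qed

lemma avg_weight_le_min_load:
  "(\<Sum>n<N. unseen_weight Q (holders n)) / (real Q * real N) \<le> min_load Q N T K M W"
proof -
  obtain l psi D where valid: "valid_shuffle Q N T K M W l psi D"
    and load: "min_load Q N T K M W = real (\<Sum>k<K. l k) / real (Q * N * T)"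
    using min_load_attained[OF assignment] .
  show ?thesis
    using divide_right_mono[OF bits_ge_weights[OF valid] of_nat_0_le_iff[of "Q * N * T"]] N Q T
    unfolding load by (simp add: field_simps)
qed

lemma avg_cost_eq:
  "cm * ((\<Sum>n<N. real (holders n)) / (real Q * real N))
   + cs * ((\<Sum>n<N. unseen_weight Q (holders n)) / (real Q * real N))
   = (\<Sum>n<N. cost_r cm cs Q (holders n)) / real N"
  unfolding cost_r_eq sum.distrib
  by (simp add: sum_divide_distrib[symmetric] sum_distrib_left[symmetric] add_divide_distrib mult.commute)

lemma opt_cost_le_avg_cost: "opt_cost \<le> (\<Sum>n<N. cost_r cm cs Q (holders n)) / real N"
proof -
  have "opt_cost \<le> cost_r cm cs Q (holders n)" for n
    using cost_r_star_le[OF holders_le] .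
  then have "(\<Sum>n<N. opt_cost) \<le> (\<Sum>n<N. cost_r cm cs Q (holders n))"
    by (intro sum_mono)
  then show ?thesis using N by (simp add: field_simps)
qed

lemma T_seq_eq: "T_seq cm cs cr Q T N K M W
    = cm * (real max_map_load / real N) + cs * min_load Q N T K M W + cr * real max_reduce_load"
  by (simp add: T_seq_def)

lemma T_seq_ge: "opt_cost + cr * real max_reduce_load \<le> T_seq cm cs cr Q T N K M W"
  using mult_left_mono[OF avg_holders_le less_imp_le[OF cm]]
    mult_left_mono[OF avg_weight_le_min_load less_imp_le[OF cs]]
    avg_cost_eq opt_cost_le_avg_cost unfolding T_seq_eq by linarith

end

locale optimal_config = config +
  assumes optimal: "T_seq cm cs cr Q T N K M W = opt_cost + cr"
begin

lemma optimal_equalities: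
  shows "max_reduce_load = 1"
    and "(\<Sum>n<N. real (holders n)) / (real Q * real N) = real max_map_load / real N"
    and "(\<Sum>n<N. unseen_weight Q (holders n)) / (real Q * real N) = min_load Q N T K M W"
    and "(\<Sum>n<N. cost_r cm cs Q (holders n)) / real N = opt_cost"
proof -
  have reduce: "cr * 1 \<le> cr * real max_reduce_load"
    using max_reduce_load_ge_1 cr by (intro mult_left_mono) simp_all
  note ineqs = mult_left_mono[OF avg_holders_le less_imp_le[OF cm]]
    mult_left_mono[OF avg_weight_le_min_load less_imp_le[OF cs]]
    avg_cost_eq opt_cost_le_avg_cost optimal[unfolded T_seq_eq] reduce
  have "cr * real max_reduce_load = cr * 1" using ineqs by linarith
  then show "max_reduce_load = 1" using cr by simp
  have "cm * ((\<Sum>n<N. real (holders n)) / (real Q * real N)) = cm * (real max_map_load / real N)"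
    using ineqs by linarith
  then show "(\<Sum>n<N. real (holders n)) / (real Q * real N) = real max_map_load / real N"
    using cm by (simp only: mult_cancel_left) simp
  have "cs * ((\<Sum>n<N. unseen_weight Q (holders n)) / (real Q * real N)) = cs * min_load Q N T K M W"
    using ineqs by linarith
  then show "(\<Sum>n<N. unseen_weight Q (holders n)) / (real Q * real N) = min_load Q N T K M W"
    using cs by (simp only: mult_cancel_left) simp
  show "(\<Sum>n<N. cost_r cm cs Q (holders n)) / real N = opt_cost" using ineqs by linarith
qed

lemma holders_le_r_star:
  assumes n: "n < N"
  shows "holders n \<le> r_star cm cs Q"
proof -
  have nonneg: "0 \<le> cost_r cm cs Q (holders m) - opt_cost" for m
    using cost_r_star_le[OF holders_le] by simp
  have "(\<Sum>m<N. cost_r cm cs Q (holders m) - opt_cost) = 0"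
    using optimal_equalities(4) N by (simp add: sum_subtractf field_simps)
  then have "cost_r cm cs Q (holders n) = opt_cost"
    using sum_nonneg_eq_0_iff[OF finite_lessThan nonneg] n by simp
  then have "\<forall>r\<le>Q. cost_r cm cs Q (holders n) \<le> cost_r cm cs Q r"
    using cost_r_star_le by simp
  then show ?thesis by (rule le_r_star[OF holders_le])
qed

lemma max_map_load_le: "real max_map_load * real Q \<le> real (r_star cm cs Q) * real N"
proof -
  have "real max_map_load * real Q = (\<Sum>n<N. real (holders n))"
    using optimal_equalities(2) N Q by (simp add: field_simps)
  also have "\<dots> \<le> (\<Sum>n<N. real (r_star cm cs Q))"
    by (rule sum_mono, rule of_nat_mono, rule holders_le_r_star) simp
  finally show ?thesis by (simp add: mult.commute)
qed

lemma exists_silent_scheme: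
  "\<exists>l psi D. valid_shuffle Q N T K M W l psi D \<and> (\<forall>q<Q. l (reducer K W q) = 0)"
proof -
  obtain l psi D where valid: "valid_shuffle Q N T K M W l psi D"
    and load: "min_load Q N T K M W = real (\<Sum>k<K. l k) / real (Q * N * T)"
    using min_load_attained[OF assignment] .
  interpret valid_scheme Q N T K M W l psi D using valid assignment by unfold_locales
  have "real (\<Sum>k<K. l k) = real T * (\<Sum>n<N. unseen_weight Q (holders n))"
    using optimal_equalities(3) N Q T unfolding load by (simp add: field_simps)
  then have "real (\<Sum>k<K. l k) \<le> real T * avg_unseen reducer_files N {} {..<Q}"
    by (simp add: avg_unseen_def)
  then show ?thesis using valid reducers_silent_if_tight by blast
qed

lemma r_star_pos: "r_star cm cs Q \<noteq> 0"
proof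
  assume r0: "r_star cm cs Q = 0"
  obtain k where k: "k < K" "0 \<in> M k" using assignment_ok_Map_cover[OF assignment, of 0] N by auto
  have "1 \<le> card (M k)"
    using k(2) assignment_ok_finite_Map[OF assignment k(1)]
    by (metis One_nat_def Suc_leI card_gt_0_iff empty_iff)
  then have "1 \<le> max_map_load" using card_Map_le[OF k(1)] by linarith
  moreover have "max_map_load * Q = 0" using max_map_load_le r0 by (simp flip: of_nat_mult)
  ultimately show False using Q by simp
qed

lemma inj_on_reducer: "inj_on (reducer K W) {..<Q}"
proof (rule inj_onI)
  fix q q' assume q: "q \<in> {..<Q}" and q': "q' \<in> {..<Q}" and eq: "reducer K W q = reducer K W q'"
  have k: "reducer K W q < K" using reducer(1)[OF assignment] q by simp
  have "card (W (reducer K W q)) \<le> 1"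
    using card_Reduce_le[OF k] optimal_equalities(1) by simp
  moreover have "finite (W (reducer K W q))"
    using assignment_ok_Reduce_subset[OF assignment k] by (rule finite_subset) simp
  moreover have "q \<in> W (reducer K W q)" "q' \<in> W (reducer K W q)"
    using reducer(2)[OF assignment, of q] reducer(2)[OF assignment, of q'] q q' eq by auto
  ultimately show "q = q'" by (metis card_le_Suc0_iff_eq One_nat_def)
qed

lemma Q_le_K: "Q \<le> K"
proof -
  have "card (reducer K W ` {..<Q}) \<le> card {..<K}"
    using reducer(1)[OF assignment] by (intro card_mono) auto
  then show ?thesis using card_image[OF inj_on_reducer] by simp
qed

lemma non_reducers_cover_files:
  assumes "r_star cm cs Q < Q"
  shows "{..<N} \<subseteq> (\<Union>j\<in>{..<K} - reducer K W ` {..<Q}. M j)"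
proof
  obtain l psi D where valid: "valid_shuffle Q N T K M W l psi D"
    and silent: "\<forall>q<Q. l (reducer K W q) = 0"
    using exists_silent_scheme by blast
  interpret valid_scheme Q N T K M W l psi D using valid assignment by unfold_locales
  fix n assume "n \<in> {..<N}"
  then have n: "n < N" by simp
  have "holders n < Q" using holders_le_r_star[OF n] assms by simp
  then have "{q \<in> {..<Q}. n \<in> reducer_files q} \<noteq> {..<Q}" by (metis card_lessThan less_irrefl)
  then obtain q where q: "q < Q" "n \<notin> reducer_files q" by auto
  show "n \<in> (\<Union>j\<in>{..<K} - reducer K W ` {..<Q}. M j)"
    using file_mapped_by_non_reducer[OF silent T n q] by auto
qed

text \<open>Each of the K - Q servers that reduce nothing maps at most r* N / Q files.\<close>
lemma K_ge:
  assumes "r_star cm cs Q < Q"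
  shows "int Q + \<lceil>real Q / real (r_star cm cs Q)\<rceil> \<le> int K"
proof -
  define rs where "rs = r_star cm cs Q"
  define H where "H = {..<K} - reducer K W ` {..<Q}"
  have "N \<le> card (\<Union>j\<in>H. M j)"
    using card_mono[OF _ non_reducers_cover_files[OF assms]] assignment_ok_finite_Map[OF assignment]
    by (simp add: H_def)
  also have "\<dots> \<le> (\<Sum>j\<in>H. card (M j))" by (rule card_UN_le) (simp add: H_def)
  also have "\<dots> \<le> card H * max_map_load"
    using sum_mono[of H "\<lambda>j. card (M j)" "\<lambda>_. max_map_load"] card_Map_le by (simp add: H_def)
  finally have "real N \<le> real (card H) * real max_map_load"
    using of_nat_mono[where 'a = real] by fastforce
  then have "real N * real Q \<le> real (card H) * real max_map_load * real Q"
    by (rule mult_right_mono) simp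
  also have "\<dots> = real (card H) * (real max_map_load * real Q)" by (simp add: mult.assoc)
  also have "\<dots> \<le> real (card H) * (real rs * real N)"
    using max_map_load_le unfolding rs_def by (intro mult_left_mono) simp_all
  finally have "real Q \<le> real (card H) * real rs" using N by (simp add: algebra_simps)
  then have "\<lceil>real Q / real rs\<rceil> \<le> int (card H)"
    using r_star_pos unfolding rs_def by (simp add: ceiling_le_iff divide_le_eq)
  moreover have "card H = K - Q"
    unfolding H_def using reducer(1)[OF assignment] card_image[OF inj_on_reducer]
    by (subst card_Diff_subset) auto
  ultimately show ?thesis using Q_le_K unfolding rs_def by simp
qed

end

section \<open>Achievability\<close>

lemma T_seq_le_of_scheme:
  assumes assignment: "assignment_ok Q N K M W" and N: "N \<ge> 1" and Q: "Q \<ge> 1" and T: "T \<ge> 1"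
    and valid: "valid_shuffle Q N T K M W l psi D" and K: "K > 0"
    and map_load: "\<And>k. k < K \<Longrightarrow> real (card (M k)) \<le> p * real N"
    and reduce_load: "\<And>k. k < K \<Longrightarrow> card (W k) \<le> 1"
    and comm_load: "real (\<Sum>k<K. l k) \<le> L * real (Q * N * T)"
    and cm: "cm \<ge> 0" and cs: "cs \<ge> 0" and cr: "cr \<ge> 0"
  shows "T_seq cm cs cr Q T N K M W \<le> cm * p + cs * L + cr"
proof -
  have pos: "real N > 0" "real (Q * N * T) > 0" using N Q T by auto
  have ne: "(\<lambda>k. card (M k)) ` {..<K} \<noteq> {}" using K by auto
  obtain k where k: "k < K" "Max ((\<lambda>k. card (M k)) ` {..<K}) = card (M k)"
    using Max_in[OF _ ne] by auto
  have map: "real (Max ((\<lambda>k. card (M k)) ` {..<K})) / real N \<le> p"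
    using map_load[OF k(1)] k(2) pos by (simp add: divide_le_eq)
  have comm: "min_load Q N T K M W \<le> L"
  proof -
    have "real (\<Sum>k<K. l k) / real (Q * N * T) \<le> L" using comm_load pos by (simp add: divide_le_eq)
    then show ?thesis using min_load_le[OF valid] by linarith
  qed
  have reduce: "real (Max ((\<lambda>k. card (W k)) ` {..<K})) \<le> 1"
    using reduce_load ne by (auto simp: Max_le_iff)
  show ?thesis
    using mult_left_mono[OF map cm] mult_left_mono[OF comm cs] mult_left_mono[OF reduce cr]
    unfolding T_seq_def by simp
qed

lemma achieves_r_star_eq_Q:
  assumes Q: "Q \<ge> 1" and T: "T \<ge> 1" and cm: "cm \<ge> 0" and cs: "cs \<ge> 0" and cr: "cr \<ge> 0"
  shows "\<exists>M W. assignment_ok Q 1 Q M W \<and> T_seq cm cs cr Q T 1 Q M W \<le> cost_r cm cs Q Q + cr"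
proof (intro exI conjI)
  define M :: "nat \<Rightarrow> nat set" where "M k = {0}" for k
  define W :: "nat \<Rightarrow> nat set" where "W k = (if k < Q then {k} else {})" for k
  have Map: "(\<Union>k<Q. M k) = {..<1}" using Q by (auto simp: M_def lessThan_empty_iff)
  have Reduce: "(\<Union>k<Q. W k) = {..<Q}" unfolding W_def by auto
  show assignment: "assignment_ok Q 1 Q M W"
    unfolding assignment_ok_def using Map Reduce by (auto simp: M_def W_def)
  have valid: "valid_shuffle Q 1 T Q M W (\<lambda>_. 0) (\<lambda>_ _. []) (\<lambda>j. {..<Q} - {j})"
    unfolding valid_shuffle_def by (auto simp: M_def W_def split: if_splits)
  have "T_seq cm cs cr Q T 1 Q M W \<le> cm * 1 + cs * 0 + cr"
    by (rule T_seq_le_of_scheme[OF assignment _ Q T valid]) (use Q cm cs cr in \<open>auto simp: W_def M_def\<close>)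
  then show "T_seq cm cs cr Q T 1 Q M W \<le> cost_r cm cs Q Q + cr"
    using Q by (simp add: cost_r_def)
qed

text \<open>Every file gets its own Map server, which sends it uncoded; the map load 1/N
  vanishes as N grows.\<close>
lemma approaches_r_star_eq_0:
  assumes N: "N \<ge> 1" and Q: "Q \<ge> 1" and T: "T \<ge> 1" and cm: "cm \<ge> 0" and cs: "cs \<ge> 0" and cr: "cr \<ge> 0"
  shows "\<exists>K M W. assignment_ok Q N K M W \<and> T_seq cm cs cr Q T N K M W \<le> cm / real N + cs + cr"
proof (intro exI conjI)
  define M :: "nat \<Rightarrow> nat set" where "M k = (if k < Q then {} else {k - Q})" for k
  define W :: "nat \<Rightarrow> nat set" where "W k = (if k < Q then {k} else {})" for k
  have Map: "(\<Union>k<Q + N. M k) = {..<N}"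
  proof
    show "{..<N} \<subseteq> (\<Union>k<Q + N. M k)"
    proof
      fix n assume "n \<in> {..<N}"
      then have "n \<in> M (Q + n)" "Q + n < Q + N" unfolding M_def by auto
      then show "n \<in> (\<Union>k<Q + N. M k)" by blast
    qed
  qed (auto simp: M_def)
  have Reduce: "(\<Union>k<Q + N. W k) = {..<Q}" unfolding W_def by (auto split: if_splits)
  show assignment: "assignment_ok Q N (Q + N) M W"
    unfolding assignment_ok_def using Map Reduce by (auto simp: M_def W_def)
  have bits: "(\<Sum>j<Q + i. card (M j) * (Q * T)) = i * (Q * T)" for i
    by (induction i) (auto simp: M_def)
  have "T_seq cm cs cr Q T N (Q + N) M W \<le> cm * (1 / real N) + cs * 1 + cr"
  proof (rule T_seq_le_of_scheme[OF assignment N Q T valid_shuffle_uncoded[OF assignment]])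
    show "real (card (M k)) \<le> 1 / real N * real N" for k using N by (simp add: M_def)
    show "card (W k) \<le> 1" for k by (simp add: W_def)
    show "real (\<Sum>k<Q + N. card (M k) * (Q * T)) \<le> 1 * real (Q * N * T)"
      unfolding bits by (simp add: ac_simps)
  qed (use Q cm cs cr in auto)
  then show "T_seq cm cs cr Q T N (Q + N) M W \<le> cm / real N + cs + cr" by simp
qed

text \<open>Files are indexed, via f, by pairs (h, S) of a copy h < m and an r-subset S of
  the Q Reduce servers. Reduce server k < Q maps the files with k \<in> S, helper
  Q + h maps copy h. For every (r+1)-set U, helper Q + h multicasts the bitwise
  parity over k \<in> U of v k (f (h, U - {k})); each k \<in> U has mapped every summand
  but its own.\<close>
locale coded_scheme =
  fixes Q r m T :: nat and f :: "nat \<times> nat set \<Rightarrow> nat" and Us :: "nat set list"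
  assumes r: "1 \<le> r" "r < Q" and m: "Q \<le> m * r" and T: "T \<ge> 1"
    and f: "bij_betw f ({..<m} \<times> {S. S \<subseteq> {..<Q} \<and> card S = r}) {..<m * (Q choose r)}"
    and Us: "distinct Us" "set Us = {U. U \<subseteq> {..<Q} \<and> card U = Suc r}"
begin

abbreviation subsets :: "nat \<Rightarrow> nat set set" where
  "subsets k \<equiv> {S. S \<subseteq> {..<Q} \<and> card S = k}"

abbreviation batches :: "(nat \<times> nat set) set" where
  "batches \<equiv> {..<m} \<times> subsets r"

abbreviation files :: nat where
  "files \<equiv> m * (Q choose r)"

definition Map :: "nat \<Rightarrow> nat set" where
  "Map k = (if k < Q then f ` {x \<in> batches. k \<in> snd x} else f ` ({k - Q} \<times> subsets r))"

definition Reduce :: "nat \<Rightarrow> nat set" where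
  "Reduce k = (if k < Q then {k} else {})"

definition parity_msg :: "nat \<Rightarrow> nat set \<Rightarrow> ivals \<Rightarrow> bool list" where
  "parity_msg h U v = map (\<lambda>t. odd (card {k\<in>U. v k (f (h, U - {k})) ! t})) [0..<T]"

definition msg :: "nat \<Rightarrow> ivals \<Rightarrow> bool list" where
  "msg k v = (if k < Q then [] else concat (map (\<lambda>U. parity_msg (k - Q) U v) Us))"

definition msg_len :: "nat \<Rightarrow> nat" where
  "msg_len k = (if k < Q then 0 else length Us * T)"

lemma f_image: "f ` batches = {..<files}"
  using f by (simp add: bij_betw_def)

lemma inj_on_f: "inj_on f batches"
  using f by (simp add: bij_betw_def)

lemma files_pos: "files \<ge> 1"
proof -
  have "m \<noteq> 0" using r m by (intro notI) simp
  then show ?thesis using r by (simp add: Suc_le_eq)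
qed

lemma Map_subset: "k < Q + m \<Longrightarrow> Map k \<subseteq> {..<files}"
  unfolding Map_def using f_image by (auto split: if_splits)

lemma assignment: "assignment_ok Q files (Q + m) Map Reduce"
proof -
  have "{..<files} \<subseteq> (\<Union>k<Q + m. Map k)"
  proof
    fix n assume "n \<in> {..<files}"
    then obtain x where x: "x \<in> batches" "n = f x" using f_image by blast
    obtain h S where "x = (h, S)" by (cases x)
    with x have "n \<in> Map (Q + h)" "Q + h < Q + m" unfolding Map_def by auto
    then show "n \<in> (\<Union>k<Q + m. Map k)" by blast
  qed
  then have "(\<Union>k<Q + m. Map k) = {..<files}" using Map_subset by fastforce
  moreover have "(\<Union>k<Q + m. Reduce k) = {..<Q}" unfolding Reduce_def by (auto split: if_splits)
  ultimately show ?thesis unfolding assignment_ok_def using Map_subset by (simp add: Reduce_def)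
qed

lemma length_parity_msg: "length (parity_msg h U v) = T"
  unfolding parity_msg_def by simp

lemma length_msg: "length (msg k v) = msg_len k"
  unfolding msg_def msg_len_def by (simp add: length_concat_map_const[where c = T] length_parity_msg)

lemma sub_in_batches: "h < m \<Longrightarrow> U \<in> subsets (Suc r) \<Longrightarrow> k \<in> U \<Longrightarrow> (h, U - {k}) \<in> batches"
  using finite_subset[of U "{..<Q}"] by auto

lemma parity_summand_mapped:
  assumes "k < Q" and "h < m" and "U \<in> subsets (Suc r)" and "k' \<in> U" and "k \<in> U - {k'}"
  shows "f (h, U - {k'}) \<in> Map k"
  using assms sub_in_batches[of h U k'] unfolding Map_def by auto

lemma msg_local:
  assumes k: "k < Q + m" and agree: "\<forall>q<Q. \<forall>n\<in>Map k. v q n = v' q n"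
  shows "msg k v = msg k v'"
proof (cases "k < Q")
  case False
  define h where "h = k - Q"
  have h: "h < m" using k False unfolding h_def by simp
  have "parity_msg h U v = parity_msg h U v'" if U: "U \<in> set Us" for U
  proof -
    have "v k' (f (h, U - {k'})) = v' k' (f (h, U - {k'}))" if "k' \<in> U" for k'
    proof -
      have "f (h, U - {k'}) \<in> Map k"
        using sub_in_batches[OF h _ that] U Us False unfolding Map_def h_def by auto
      moreover have "k' < Q" using U Us that by auto
      ultimately show ?thesis using agree by blast
    qed
    then show ?thesis unfolding parity_msg_def
      by (intro map_cong refl arg_cong[where f = "\<lambda>A. odd (card A)"]) auto
  qed
  then show ?thesis unfolding msg_def h_def using False by (simp cong: map_cong)
qed (simp add: msg_def)

lemma parity_msg_eq:
  assumes "msg (Q + h) v = msg (Q + h) v'" and "U \<in> set Us"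
  shows "parity_msg h U v = parity_msg h U v'"
proof -
  have "concat (map (\<lambda>U. parity_msg h U v) Us) = concat (map (\<lambda>U. parity_msg h U v') Us)"
    using assms(1) unfolding msg_def by simp
  then have "map (\<lambda>U. parity_msg h U v) Us = map (\<lambda>U. parity_msg h U v') Us"
    by (rule concat_map_eq_imp_map_eq) (simp add: length_parity_msg)
  then show ?thesis using assms(2) by (simp add: map_eq_conv)
qed

lemma parity_msg_decodable:
  assumes k: "k < Q" and h: "h < m" and U: "U \<in> subsets (Suc r)" and kU: "k \<in> U"
    and agree: "\<forall>q<Q. \<forall>n\<in>Map k. v q n = v' q n"
    and eq: "parity_msg h U v = parity_msg h U v'" and t: "t < T"
  shows "v k (f (h, U - {k})) ! t = v' k (f (h, U - {k})) ! t"
proof (rule eq_at_point_if_parity_eq[where U = U and P = "\<lambda>k'. v k' (f (h, U - {k'})) ! t"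
      and P' = "\<lambda>k'. v' k' (f (h, U - {k'})) ! t"])
  show "finite U" using U finite_subset[of U "{..<Q}"] by simp
  show "odd (card {k'\<in>U. v k' (f (h, U - {k'})) ! t}) = odd (card {k'\<in>U. v' k' (f (h, U - {k'})) ! t})"
    using eq t unfolding parity_msg_def by (simp add: map_eq_conv)
  show "\<forall>k'\<in>U - {k}. (v k' (f (h, U - {k'})) ! t) = (v' k' (f (h, U - {k'})) ! t)"
  proof
    fix k' assume k': "k' \<in> U - {k}"
    have "f (h, U - {k'}) \<in> Map k" by (rule parity_summand_mapped[OF k h U]) (use k' kU in auto)
    moreover have "k' < Q" using U k' by auto
    ultimately show "(v k' (f (h, U - {k'})) ! t) = (v' k' (f (h, U - {k'})) ! t)" using agree by simp
  qed
qed (rule kU)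

lemma decodable:
  assumes k: "k < Q" and v: "realization Q files T v" and v': "realization Q files T v'"
    and agree: "\<forall>q<Q. \<forall>n\<in>Map k. v q n = v' q n"
    and received: "\<forall>h<m. msg (Q + h) v = msg (Q + h) v'" and n: "n < files"
  shows "v k n = v' k n"
proof (cases "n \<in> Map k")
  case True
  then show ?thesis using agree k by auto
next
  case False
  obtain x where x: "x \<in> batches" "n = f x" using f_image n by blast
  obtain h S where hS: "x = (h, S)" by (cases x)
  have h: "h < m" and S: "S \<in> subsets r" using x hS by auto
  have kS: "k \<notin> S"
  proof
    assume "k \<in> S"
    then have "n \<in> Map k" using k x hS by (auto simp: Map_def)
    then show False using False by simp
  qed
  have "finite S" using S finite_subset[of S "{..<Q}"] by simp
  then have U: "insert k S \<in> subsets (Suc r)" using S kS k by simp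
  have "insert k S \<in> set Us" using U Us(2) by simp
  then have eq: "parity_msg h (insert k S) v = parity_msg h (insert k S) v'"
    by (rule parity_msg_eq[OF received[rule_format, OF h]])
  have n_eq: "n = f (h, insert k S - {k})" using kS x hS by simp
  have "v k n ! t = v' k n ! t" if "t < T" for t
    unfolding n_eq by (rule parity_msg_decodable[OF k h U insertI1 agree eq that])
  moreover have "length (v k n) = T" "length (v' k n) = T"
    using v v' k n unfolding realization_def by auto
  ultimately show ?thesis by (intro nth_equalityI) auto
qed

lemma valid: "valid_shuffle Q files T (Q + m) Map Reduce msg_len msg (\<lambda>j. {..<Q + m} - {j})"
  unfolding valid_shuffle_def
proof (intro conjI allI impI ballI)
  fix k v v' q n
  assume v: "realization Q files T v" and v': "realization Q files T v'"
    and agree: "\<forall>q<Q. \<forall>n\<in>Map k. v q n = v' q n"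
    and received: "\<forall>j<Q + m. k \<in> {..<Q + m} - {j} \<longrightarrow> msg j v = msg j v'"
    and q: "q \<in> Reduce k" and n: "n < files"
  have qk: "q = k" "k < Q" using q by (auto simp: Reduce_def split: if_splits)
  have "\<forall>h<m. msg (Q + h) v = msg (Q + h) v'" using received qk(2) by auto
  then show "v q n = v' q n" using decodable[OF qk(2) v v' agree _ n] qk(1) by simp
qed (rule msg_local, assumption+ | simp add: length_msg)+

lemma card_Map: assumes k: "k < Q + m" shows "Q * card (Map k) \<le> r * files"
proof (cases "k < Q")
  case True
  have "card (Map k) = card {x \<in> batches. k \<in> snd x}"
    unfolding Map_def using True by (simp add: card_image inj_on_subset[OF inj_on_f])
  also have "{x \<in> batches. k \<in> snd x} = {..<m} \<times> {S. S \<subseteq> {..<Q} \<and> card S = r \<and> k \<in> S}"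
    by auto
  also have "card \<dots> = m * ((Q - 1) choose (r - 1))"
    by (simp add: card_cartesian_product card_subsets_containing[OF True r(1)])
  finally have "Q * card (Map k) = m * (r * (Q choose r))"
    using times_binomial_minus1_eq[of r Q] r by simp
  then show ?thesis by simp
next
  case False
  have "{k - Q} \<times> subsets r \<subseteq> batches" using k False by auto
  then have "card (Map k) = Q choose r"
    using False by (simp add: Map_def card_image inj_on_subset[OF inj_on_f] card_cartesian_product n_subsets)
  then show ?thesis using m by (simp add: mult.assoc mult.left_commute)
qed

lemma sum_msg_len: "(\<Sum>k<Q + m. msg_len k) = m * ((Q choose Suc r) * T)"
proof -
  have "length Us = Q choose Suc r"
    using distinct_card[OF Us(1)] Us(2) by (simp add: n_subsets)
  moreover have "(\<Sum>k<Q + j. msg_len k) = j * (length Us * T)" for j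
    by (induction j) (auto simp: msg_len_def)
  ultimately show ?thesis by simp
qed

lemma comm_load:
  "real (\<Sum>k<Q + m. msg_len k) = (real Q - real r) / (real Q * (real r + 1)) * real (Q * files * T)"
proof -
  have binom: "(real Q - real r) * real (Q choose r) = (real r + 1) * real (Q choose Suc r)"
    using binomial_absorption[of r Q] binomial_absorb_comp[of Q r] r
    by (metis of_nat_Suc of_nat_diff of_nat_mult less_imp_le add.commute)
  have cancel: "a / (real Q * b) * (real Q * c) = a * c / b" for a b c :: real
    using r by (cases "b = 0") (simp_all add: field_simps)
  have "(real Q - real r) / (real Q * (real r + 1)) * real (Q * files * T)
      = (real Q - real r) * real (Q choose r) * (real m * real T) / (real r + 1)"
    using cancel[of "real Q - real r" "real r + 1" "real (Q choose r) * (real m * real T)"]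
    by (simp add: ac_simps)
  also have "\<dots> = real (Q choose Suc r) * (real m * real T)"
    unfolding binom by simp
  finally show ?thesis unfolding sum_msg_len by simp
qed

lemma T_seq_le:
  assumes "cm \<ge> 0" and "cs \<ge> 0" and "cr \<ge> 0"
  shows "T_seq cm cs cr Q T files (Q + m) Map Reduce \<le> cost_r cm cs Q r + cr"
proof -
  have "T_seq cm cs cr Q T files (Q + m) Map Reduce
      \<le> cm * (real r / real Q) + cs * ((real Q - real r) / (real Q * (real r + 1))) + cr"
  proof (rule T_seq_le_of_scheme[OF assignment files_pos _ T valid])
    show "real (card (Map k)) \<le> real r / real Q * real files" if "k < Q + m" for k
      using card_Map[OF that] r of_nat_mono[OF card_Map[OF that], where 'a = real]
      by (simp add: field_simps)
  qed (use r assms comm_load in \<open>auto simp: Reduce_def\<close>)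
  then show ?thesis unfolding cost_r_def by simp
qed

end

lemma achieves_coded:
  assumes r: "1 \<le> r" "r < Q" and T: "T \<ge> 1" and cm: "cm \<ge> 0" and cs: "cs \<ge> 0" and cr: "cr \<ge> 0"
  shows "\<exists>N M W. N \<ge> 1 \<and> assignment_ok Q N (Q + nat \<lceil>real Q / real r\<rceil>) M W
     \<and> T_seq cm cs cr Q T N (Q + nat \<lceil>real Q / real r\<rceil>) M W \<le> cost_r cm cs Q r + cr"
proof -
  define m where "m = nat \<lceil>real Q / real r\<rceil>"
  have "real Q / real r \<le> real m" unfolding m_def by linarith
  then have "Q \<le> m * r" using r by (simp add: divide_le_eq flip: of_nat_mult)
  obtain f where f: "bij_betw f ({..<m} \<times> {S. S \<subseteq> {..<Q} \<and> card S = r}) {..<m * (Q choose r)}"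
    using ex_bij_betw_finite_nat[of "{..<m} \<times> {S. S \<subseteq> {..<Q} \<and> card S = r}"]
    by (auto simp: card_cartesian_product n_subsets atLeast0LessThan)
  obtain Us where "set Us = {U. U \<subseteq> {..<Q} \<and> card U = Suc r}" "distinct Us"
    using finite_distinct_list[of "{U. U \<subseteq> {..<Q} \<and> card U = Suc r}"] by auto
  then interpret coded_scheme Q r m T f Us
    using r T f \<open>Q \<le> m * r\<close> by unfold_locales auto
  show ?thesis
    using files_pos assignment T_seq_le[OF cm cs cr] unfolding m_def by blast
qed

section \<open>The optimum\<close>

definition K_star :: "real \<Rightarrow> real \<Rightarrow> nat \<Rightarrow> nat" where
  "K_star cm cs Q = (if r_star cm cs Q < Q then Q + nat \<lceil>real Q / real (r_star cm cs Q)\<rceil> else Q)"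

context
  fixes cm cs cr :: real and Q T :: nat
  assumes Q: "Q \<ge> 1" and T: "T \<ge> 1" and cm: "cm > 0" and cs: "cs > 0" and cr: "cr > 0"
begin

lemma T_seq_ge_opt:
  assumes "N \<ge> 1" and "assignment_ok Q N K M W"
  shows "cost_r cm cs Q (r_star cm cs Q) + cr \<le> T_seq cm cs cr Q T N K M W"
proof -
  interpret config cm cs cr Q T N K M W using assms Q T cm cs cr by unfold_locales
  have "cr * 1 \<le> cr * real max_reduce_load"
    using max_reduce_load_ge_1 cr by (intro mult_left_mono) simp_all
  then show ?thesis using T_seq_ge by simp
qed

lemma achieves_K_star:
  assumes "r_star cm cs Q \<noteq> 0"
  shows "\<exists>N M W. N \<ge> 1 \<and> assignment_ok Q N (K_star cm cs Q) M W
    \<and> T_seq cm cs cr Q T N (K_star cm cs Q) M W \<le> cost_r cm cs Q (r_star cm cs Q) + cr"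
proof (cases "r_star cm cs Q < Q")
  case True
  then show ?thesis
    using achieves_coded[of "r_star cm cs Q" Q T cm cs cr] assms T cm cs cr
    by (simp add: K_star_def)
next
  case False
  then have rs: "r_star cm cs Q = Q" using r_star_le[of cm cs Q] by simp
  obtain M W where "assignment_ok Q 1 Q M W" "T_seq cm cs cr Q T 1 Q M W \<le> cost_r cm cs Q Q + cr"
    using achieves_r_star_eq_Q[OF Q T, of cm cs cr] cm cs cr by auto
  then show ?thesis using rs unfolding K_star_def by (intro exI[of _ 1]) auto
qed

lemma T_seq_opt_ge: "cost_r cm cs Q (r_star cm cs Q) + cr \<le> T_seq_opt cm cs cr Q T"
proof -
  obtain K M W where "assignment_ok Q 1 K M W"
    using approaches_r_star_eq_0[of 1 Q T cm cs cr] Q T cm cs cr by auto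
  then have "{T_seq cm cs cr Q T N K M W | N K M W. N \<ge> 1 \<and> assignment_ok Q N K M W} \<noteq> {}"
    by blast
  then show ?thesis
    unfolding T_seq_opt_def using T_seq_ge_opt by (intro cInf_greatest) auto
qed

lemma T_seq_opt_le:
  assumes "N \<ge> 1" and "assignment_ok Q N K M W"
  shows "T_seq_opt cm cs cr Q T \<le> T_seq cm cs cr Q T N K M W"
  unfolding T_seq_opt_def
proof (rule cInf_lower)
  show "bdd_below {T_seq cm cs cr Q T N K M W | N K M W. N \<ge> 1 \<and> assignment_ok Q N K M W}"
    using T_seq_ge_opt by (auto intro!: bdd_belowI[of _ "cost_r cm cs Q (r_star cm cs Q) + cr"])
qed (use assms in blast)

text \<open>For r* = 0 the optimum is an infimum that is not attained.\<close>
lemma T_seq_opt_le_if_r_star_0: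
  assumes "r_star cm cs Q = 0"
  shows "T_seq_opt cm cs cr Q T \<le> cost_r cm cs Q (r_star cm cs Q) + cr"
proof (rule field_le_epsilon)
  fix e :: real assume e: "e > 0"
  obtain N :: nat where N: "cm / e < real N" using reals_Archimedean2 by blast
  have "0 < cm / e" using cm e by simp
  then have N1: "N \<ge> 1" using N by simp
  obtain K M W where "assignment_ok Q N K M W" and "T_seq cm cs cr Q T N K M W \<le> cm / real N + cs + cr"
    using approaches_r_star_eq_0[OF N1 Q T, of cm cs cr] cm cs cr by auto
  then have "T_seq_opt cm cs cr Q T \<le> cm / real N + cs + cr" using T_seq_opt_le[OF N1] by force
  moreover have "cm < real N * e" using N e by (simp add: divide_less_eq mult.commute)
  then have "cm / real N < e" using N1 by (simp add: divide_less_eq mult.commute)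
  moreover have "cost_r cm cs Q (r_star cm cs Q) = cs" using assms Q by (simp add: cost_r_def)
  ultimately show "T_seq_opt cm cs cr Q T \<le> cost_r cm cs Q (r_star cm cs Q) + cr + e" by linarith
qed

lemma T_seq_opt_eq: "T_seq_opt cm cs cr Q T = cost_r cm cs Q (r_star cm cs Q) + cr"
proof (rule antisym[OF _ T_seq_opt_ge])
  show "T_seq_opt cm cs cr Q T \<le> cost_r cm cs Q (r_star cm cs Q) + cr"
  proof (cases "r_star cm cs Q = 0")
    case False
    then obtain N M W where "N \<ge> 1" "assignment_ok Q N (K_star cm cs Q) M W"
      "T_seq cm cs cr Q T N (K_star cm cs Q) M W \<le> cost_r cm cs Q (r_star cm cs Q) + cr"
      using achieves_K_star by blast
    then show ?thesis using T_seq_opt_le by fastforce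
  qed (rule T_seq_opt_le_if_r_star_0)
qed

lemma achieves_opt_imp:
  assumes "achieves_opt cm cs cr Q T K"
  shows "r_star cm cs Q \<noteq> 0" and "Q \<le> K"
    and "r_star cm cs Q < Q \<Longrightarrow> int Q + \<lceil>real Q / real (r_star cm cs Q)\<rceil> \<le> int K"
proof -
  obtain N M W where "N \<ge> 1" "assignment_ok Q N K M W"
    "T_seq cm cs cr Q T N K M W = T_seq_opt cm cs cr Q T"
    using assms unfolding achieves_opt_def by blast
  then interpret optimal_config cm cs cr Q T N K M W
    using Q T cm cs cr T_seq_opt_eq by unfold_locales auto
  show "r_star cm cs Q \<noteq> 0" by (rule r_star_pos)
  show "Q \<le> K" by (rule Q_le_K)
  show "r_star cm cs Q < Q \<Longrightarrow> int Q + \<lceil>real Q / real (r_star cm cs Q)\<rceil> \<le> int K" by (rule K_ge)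
qed

lemma achieves_opt_K_star:
  assumes "r_star cm cs Q \<noteq> 0"
  shows "achieves_opt cm cs cr Q T (K_star cm cs Q)"
proof -
  obtain N M W where "N \<ge> 1" "assignment_ok Q N (K_star cm cs Q) M W"
    "T_seq cm cs cr Q T N (K_star cm cs Q) M W \<le> cost_r cm cs Q (r_star cm cs Q) + cr"
    using achieves_K_star[OF assms] by blast
  then show ?thesis
    unfolding achieves_opt_def T_seq_opt_eq using T_seq_ge_opt by (blast intro: antisym)
qed

lemma Least_achieves_opt:
  assumes "r_star cm cs Q \<noteq> 0"
  shows "(LEAST K. achieves_opt cm cs cr Q T K) = K_star cm cs Q"
proof (rule Least_equality)
  show "achieves_opt cm cs cr Q T (K_star cm cs Q)" by (rule achieves_opt_K_star[OF assms])
  fix K assume "achieves_opt cm cs cr Q T K"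
  then show "K_star cm cs Q \<le> K"
    using achieves_opt_imp[of K] unfolding K_star_def by (cases "r_star cm cs Q < Q") auto
qed

end

theorem theorem1:
  fixes cm cs cr :: real and Q T :: nat
  assumes "Q \<ge> 1" and "T \<ge> 1" and "cm > 0" and "cs > 0" and "cr > 0"
  shows "T_seq_opt cm cs cr Q T = cost_r cm cs Q (r_star cm cs Q) + cr
         \<and> ((\<exists>K. achieves_opt cm cs cr Q T K) \<longleftrightarrow> r_star cm cs Q \<noteq> 0)
         \<and> (r_star cm cs Q \<noteq> 0 \<longrightarrow>
             int (LEAST K. achieves_opt cm cs cr Q T K) =
             (if r_star cm cs Q < Q
              then int Q + \<lceil>real Q / real (r_star cm cs Q)\<rceil>
              else int Q))"
proof (intro conjI impI)
  show "T_seq_opt cm cs cr Q T = cost_r cm cs Q (r_star cm cs Q) + cr"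
    using T_seq_opt_eq assms by blast
  show "(\<exists>K. achieves_opt cm cs cr Q T K) \<longleftrightarrow> r_star cm cs Q \<noteq> 0"
    using achieves_opt_imp(1) achieves_opt_K_star assms by blast
  assume "r_star cm cs Q \<noteq> 0"
  moreover have "0 \<le> real Q / real (r_star cm cs Q)" by simp
  then have "0 \<le> \<lceil>real Q / real (r_star cm cs Q)\<rceil>" by linarith
  ultimately show "int (LEAST K. achieves_opt cm cs cr Q T K) =
      (if r_star cm cs Q < Q then int Q + \<lceil>real Q / real (r_star cm cs Q)\<rceil> else int Q)"
    using Least_achieves_opt assms by (simp add: K_star_def)
qed

end
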